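(* Let $(\Gamma,\omega,\Phi)$ be a classical Poincaré-invariant system with timelike future-directed four-momentum. Let $\chi$ be an SSC position observable, i.e. there is a map $f\colon\mathsf{SpHP}\times\Gamma\to V$ with values in the future-directed timelike vectors such that $\chi$ is the SSC position observable with respect to $f$. Suppose that for each $\gamma\in\Gamma$ the map $\Sigma\mapsto\chi(\Sigma)(\gamma)$ is continuous, and that $\chi$ is a centre of spin. Then $\chi=\chi^{\mathrm{NW}}$.
   Context: Minkowski spacetime: affine space $M$ over a 4-dimensional real vector space $V$ with metric $\eta$ of signature $(-,+,+,+)$, fixed orientation and time orientation, fixed origin identifying $M$ with $V$. $u\cdot v:=\eta(u,v)$, indices lowered/raised with $\eta$; $\varepsilon$ is the volume form with $\varepsilon_{0123}=+1$ in positively oriented orthonormal bases; $c>0$. $\mathsf{SpHP}$ is the set of spacelike hyperplanes, each identified with $(u,\tau)$ ($u$ future-directed unit timelike normal, $\tau\in\mathbb R$, $\Sigma=\{x:u\cdot x=-\tau\}$), topologised as a subset of (unit hyperboloid)$\times\mathbb R$. A classical Poincaré-invariant system has phase-space functions $P_\mu$ and $J_{\mu\nu}=-J_{\nu\mu}$; $m=\sqrt{-P\cdot P}/c$. A position observable is a map $\chi\colon\mathsf{SpHP}\times\Gamma\to M$ with $u_\mu\chi^\mu(u,\tau)=-\tau$ and $\partial\chi_\mu/\partial\tau=P_\mu/(-u\cdot P)$; spin tensor $S(u)_{\mu\nu}=J_{\mu\nu}-\chi_\mu(u,\tau)P_\nu+\chi_\nu(u,\tau)P_\mu$. SSC position observable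 with respect to $f$: $\chi_\mu(u,\tau)=\frac{J_{\mu\rho}f^\rho}{f\cdot P}+\frac{\tau P_\mu}{(-u\cdot P)}-\frac{J_{\lambda\rho}u^\lambda f^\rho}{(-f\cdot P)}\frac{P_\mu}{(-u\cdot P)}$ (intersection of $\Sigma$ with the line of solutions $x$ of $(J_{\mu\nu}-x_\mu P_\nu+x_\nu P_\mu)f^\nu=0$). Pauli–Lubański vector $W_\mu=-\tfrac12\varepsilon_{\mu\nu\rho\sigma}P^\nu J^{\rho\sigma}$; spin vector $s(u)=B(u)W/(mc)$ with $B^\mu{}_\nu(u)=\delta^\mu_\nu+\frac{(P^\mu/(mc)+u^\mu)(P_\nu/(mc)+u_\nu)}{1-u\cdot P/(mc)}-2\frac{u^\mu P_\nu}{mc}$. $\chi$ is a centre of spin if $s_\mu(u)=-\tfrac12\varepsilon_{\mu\nu\rho\sigma}u^\nu S^{\rho\sigma}(u)$ for all $(u,\tau)$ and phase-space points. Newton–Wigner observable $\chi^{\mathrm{NW}}$: the SSC position observable with $f=u+P/(mc)$, explicitly $\chi^{\mathrm{NW}}_\mu(u,\tau)=-\frac{J_{\mu\rho}(u^\rho+P^\rho/(mc))}{mc-u\cdot P}+\frac{\tau P_\mu}{(-u\cdot P)}-\frac{J_{\lambda\rho}u^\lambda P^\rho}{mc(mc-u\cdot P)}\frac{P_\mu}{(-u\cdot P)}$. *)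

theory Defs
  imports "HOL-Analysis.Analysis"
begin

text \<open>Minkowski space V is modelled as real^4, the standard basis being a fixed
positively oriented, time-oriented orthonormal basis (e_0 future-directed).
Vectors are stored by their contravariant components v^mu; second-rank tensors
(J, S) by their contravariant components T^{mu nu}.\<close>

definition eta :: "4 \<Rightarrow> 4 \<Rightarrow> real" where
  "eta i j = (if i = j then (if i = 0 then -1 else 1) else 0)"

definition mdot :: "real^4 \<Rightarrow> real^4 \<Rightarrow> real" where
  "mdot u v = (\<Sum>i\<in>UNIV. \<Sum>j\<in>UNIV. eta i j * u$i * v$j)"

text \<open>lowering / raising indices (eta is its own inverse)\<close>
definition low :: "real^4 \<Rightarrow> real^4" where
  "low v = (\<chi> i. \<Sum>j\<in>UNIV. eta i j * v$j)"

definition raise :: "real^4 \<Rightarrow> real^4" where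
  "raise w = (\<chi> i. \<Sum>j\<in>UNIV. eta i j * w$j)"

definition future_timelike :: "real^4 \<Rightarrow> bool" where
  "future_timelike v \<longleftrightarrow> mdot v v < 0 \<and> v$0 > 0"

text \<open>Spacelike hyperplanes Sigma = (u, tau), u on the future unit hyperboloid.\<close>
definition SpHP :: "((real^4) \<times> real) set" where
  "SpHP = {(u, \<tau>). mdot u u = -1 \<and> u$0 > 0}"

definition rows4 :: "real^4 \<Rightarrow> real^4 \<Rightarrow> real^4 \<Rightarrow> real^4 \<Rightarrow> real^4^4" where
  "rows4 a b c d = (\<chi> r. if r = 0 then a else if r = 1 then b else if r = 2 then c else d)"

text \<open>Volume form with lower indices, epsilon_{0123} = +1.\<close>
definition lc :: "4 \<Rightarrow> 4 \<Rightarrow> 4 \<Rightarrow> 4 \<Rightarrow> real" where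
  "lc m n r s = det (rows4 (axis m 1) (axis n 1) (axis r 1) (axis s 1))"

definition antisym_tensor :: "real^4^4 \<Rightarrow> bool" where
  "antisym_tensor T \<longleftrightarrow> (\<forall>m n. T$m$n = - T$n$m)"

definition mass :: "real \<Rightarrow> real^4 \<Rightarrow> real" where
  "mass c P = sqrt (- mdot P P) / c"

definition Jdot :: "real^4^4 \<Rightarrow> real^4 \<Rightarrow> real^4" where
  "Jdot J f = (\<chi> m. \<Sum>r\<in>UNIV. J$m$r * (low f)$r)"

definition jform :: "real^4^4 \<Rightarrow> real^4 \<Rightarrow> real^4 \<Rightarrow> real" where
  "jform J u f = (\<Sum>l\<in>UNIV. \<Sum>r\<in>UNIV. J$l$r * (low u)$l * (low f)$r)"

definition chi_ssc :: "real^4 \<Rightarrow> real^4^4 \<Rightarrow> real^4 \<Rightarrow> real^4 \<Rightarrow> real \<Rightarrow> real^4" where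
  "chi_ssc P J f u \<tau> =
     (1 / mdot f P) *\<^sub>R Jdot J f
     + (\<tau> / (- mdot u P)) *\<^sub>R P
     - (jform J u f / (- mdot f P) * (1 / (- mdot u P))) *\<^sub>R P"

definition chi_NW :: "real \<Rightarrow> real^4 \<Rightarrow> real^4^4 \<Rightarrow> real^4 \<Rightarrow> real \<Rightarrow> real^4" where
  "chi_NW c P J u \<tau> =
     (let mc = mass c P * c in
       - (1 / (mc - mdot u P)) *\<^sub>R Jdot J (u + (1 / mc) *\<^sub>R P)
       + (\<tau> / (- mdot u P)) *\<^sub>R P
       - (jform J u P / (mc * (mc - mdot u P)) * (1 / (- mdot u P))) *\<^sub>R P)"

definition spin_tensor :: "real^4 \<Rightarrow> real^4^4 \<Rightarrow> real^4 \<Rightarrow> real^4^4" where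
  "spin_tensor P J x = (\<chi> m n. J$m$n - x$m * P$n + x$n * P$m)"

definition PL_low :: "real^4 \<Rightarrow> real^4^4 \<Rightarrow> real^4" where
  "PL_low P J = (\<chi> m. - (1/2) * (\<Sum>n\<in>UNIV. \<Sum>r\<in>UNIV. \<Sum>s\<in>UNIV. lc m n r s * P$n * J$r$s))"

definition Bmat :: "real \<Rightarrow> real^4 \<Rightarrow> real^4 \<Rightarrow> real^4^4" where
  "Bmat c P u = (let mc = mass c P * c in
     (\<chi> m n. (if m = n then 1 else 0)
        + (P$m / mc + u$m) * ((low P)$n / mc + (low u)$n) / (1 - mdot u P / mc)
        - 2 * u$m * (low P)$n / mc))"

definition spin_vec :: "real \<Rightarrow> real^4 \<Rightarrow> real^4^4 \<Rightarrow> real^4 \<Rightarrow> real^4" where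
  "spin_vec c P J u = (1 / (mass c P * c)) *\<^sub>R (Bmat c P u *v raise (PL_low P J))"

definition dual_u :: "real^4 \<Rightarrow> real^4^4 \<Rightarrow> real^4" where
  "dual_u u S = (\<chi> m. - (1/2) * (\<Sum>n\<in>UNIV. \<Sum>r\<in>UNIV. \<Sum>s\<in>UNIV. lc m n r s * u$n * S$r$s))"

definition centre_of_spin ::
  "real \<Rightarrow> ('g \<Rightarrow> real^4) \<Rightarrow> ('g \<Rightarrow> real^4^4) \<Rightarrow> ((real^4) \<times> real \<Rightarrow> 'g \<Rightarrow> real^4) \<Rightarrow> bool" where
  "centre_of_spin c P J \<chi>' \<longleftrightarrow>
     (\<forall>(u, \<tau>)\<in>SpHP. \<forall>\<gamma>.
        low (spin_vec c (P \<gamma>) (J \<gamma>) u) = dual_u u (spin_tensor (P \<gamma>) (J \<gamma>) (\<chi>' (u, \<tau>) \<gamma>)))"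

definition is_SSC_observable ::
  "('g \<Rightarrow> real^4) \<Rightarrow> ('g \<Rightarrow> real^4^4) \<Rightarrow> ((real^4) \<times> real \<Rightarrow> 'g \<Rightarrow> real^4) \<Rightarrow> bool" where
  "is_SSC_observable P J \<chi>' \<longleftrightarrow>
     (\<exists>f :: (real^4) \<times> real \<Rightarrow> 'g \<Rightarrow> real^4.
        (\<forall>\<Sigma>\<in>SpHP. \<forall>\<gamma>. future_timelike (f \<Sigma> \<gamma>)) \<and>
        (\<forall>(u, \<tau>)\<in>SpHP. \<forall>\<gamma>. \<chi>' (u, \<tau>) \<gamma> = chi_ssc (P \<gamma>) (J \<gamma>) (f (u, \<tau>) \<gamma>) u \<tau>))"

end

theory Submission
  imports Defs
begin

text \<open>Fix a hyperplane (u, \<tau>) and a phase-space point. The SSC position x and the Newton--Wigner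
position x_NW both lie on the hyperplane and their spin tensors S(x), S(x_NW) are
degenerate (they annihilate f, resp. u + P/(mc)). A direct computation shows that x_NW is itself a
centre of spin, so the centre-of-spin condition for x says that d = x - x_NW satisfies
\<epsilon>(\<cdot>, u, d, P) = 0 besides u \<cdot> d = 0. If the Pauli--Lubanski vector W vanishes, both spin tensors
vanish, so d is parallel to P and hence d = 0. Otherwise degeneracy kills the Pfaffian, and since
Pf S(y) = Pf J + W \<cdot> y this gives W \<cdot> d = 0; when W \<cdot> u \<noteq> 0 this forces d = 0. The hyperplanes
with W \<cdot> u = 0 are limits of hyperplanes with W \<cdot> u \<noteq> 0 (boost u slightly towards W), and both
observables are continuous in the hyperplane.\<close>

section \<open>Coordinates and the Levi-Civita symbol\<close>

lemma exhaust_4: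
  fixes x :: 4
  shows "x = 0 \<or> x = 1 \<or> x = 2 \<or> x = 3"
proof (induct x)
  case (of_int z)
  then have "z = 0 \<or> z = 1 \<or> z = 2 \<or> z = 3" by fastforce
  then show ?case by auto
qed

lemma UNIV_4: "(UNIV :: 4 set) = {0, 1, 2, 3}"
  using exhaust_4 by auto

lemma sum_UNIV_4: "sum f (UNIV :: 4 set) = f 0 + f 1 + f 2 + f 3"
  unfolding UNIV_4 by (simp add: ac_simps)

lemma vec_4_eq_iff: "(x :: 'a^4) = y \<longleftrightarrow> x$0 = y$0 \<and> x$1 = y$1 \<and> x$2 = y$2 \<and> x$3 = y$3"
proof -
  have "(\<forall>i::4. Q i) \<longleftrightarrow> Q 0 \<and> Q 1 \<and> Q 2 \<and> Q 3" for Q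
    using exhaust_4 by metis
  then show ?thesis by (simp add: vec_eq_iff)
qed

lemma rows4_nth [simp]:
  "rows4 a b c d $ 0 = a" "rows4 a b c d $ 1 = b" "rows4 a b c d $ 2 = c" "rows4 a b c d $ 3 = d"
  by (simp_all add: rows4_def)

lemma det_transpose_rows:
  fixes A :: "'a::comm_ring_1^'n^'n"
  assumes "i \<noteq> j"
  shows "det (\<chi> k. A $ Transposition.transpose i j k) = - det A"
  using det_permute_rows[OF permutes_swap_id[of i UNIV j], of A] assms by (simp add: sign_swap_id)

lemma lc_0123 [simp]: "lc 0 1 2 3 = 1"
proof -
  have "rows4 (axis 0 1) (axis 1 1) (axis 2 1) (axis 3 1) = (mat 1 :: real^4^4)"
    by (simp add: vec_4_eq_iff axis_def mat_def)
  then show ?thesis by (simp add: lc_def)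
qed

lemma lc_swap:
  "lc b a c d = - lc a b c d" "lc a c b d = - lc a b c d" "lc a b d c = - lc a b c d"
proof -
  let ?A = "rows4 (axis a 1) (axis b 1) (axis c 1) (axis d (1::real))"
  have "rows4 (axis b 1) (axis a 1) (axis c 1) (axis d 1) = (\<chi> k. ?A $ Transposition.transpose 0 1 k)"
    "rows4 (axis a 1) (axis c 1) (axis b 1) (axis d 1) = (\<chi> k. ?A $ Transposition.transpose 1 2 k)"
    "rows4 (axis a 1) (axis b 1) (axis d 1) (axis c 1) = (\<chi> k. ?A $ Transposition.transpose 2 3 k)"
    by (simp_all add: vec_4_eq_iff)
  then show "lc b a c d = - lc a b c d" "lc a c b d = - lc a b c d" "lc a b d c = - lc a b c d"
    unfolding lc_def by (simp_all add: det_transpose_rows)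
qed

lemma lc_repeated [simp]:
  "lc a a c d = 0" "lc a b a d = 0" "lc a b c a = 0" "lc a b b d = 0" "lc a b c b = 0" "lc a b c c = 0"
  unfolding lc_def
  by (rule det_identical_rows[of 0 1] det_identical_rows[of 0 2] det_identical_rows[of 0 3]
      det_identical_rows[of 1 2] det_identical_rows[of 1 3] det_identical_rows[of 2 3],
      simp, simp add: row_def vec_eq_iff)+

lemma lc_permutation [simp]:
  "lc 1 0 2 3 = -1" "lc 0 2 1 3 = -1" "lc 0 1 3 2 = -1" "lc 1 2 0 3 = 1" "lc 1 0 3 2 = 1"
  "lc 2 0 1 3 = 1" "lc 0 2 3 1 = 1" "lc 0 3 1 2 = 1" "lc 2 1 0 3 = -1" "lc 1 2 3 0 = -1"
  "lc 1 3 0 2 = -1" "lc 2 0 3 1 = -1" "lc 0 3 2 1 = -1" "lc 3 0 1 2 = -1" "lc 2 1 3 0 = 1"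
  "lc 1 3 2 0 = 1" "lc 3 1 0 2 = 1" "lc 2 3 0 1 = 1" "lc 3 0 2 1 = 1" "lc 2 3 1 0 = -1"
  "lc 3 1 2 0 = -1" "lc 3 2 0 1 = -1" "lc 3 2 1 0 = 1"
  using lc_swap(1)[of 0 1 2 3] lc_swap(2)[of 0 1 2 3] lc_swap(3)[of 0 1 2 3] lc_swap(2)[of 1 0 2 3]
    lc_swap(3)[of 1 0 2 3] lc_swap(1)[of 0 2 1 3] lc_swap(3)[of 0 2 1 3] lc_swap(2)[of 0 1 3 2]
    lc_swap(1)[of 1 2 0 3] lc_swap(3)[of 1 2 0 3] lc_swap(2)[of 1 0 3 2] lc_swap(3)[of 2 0 1 3]
    lc_swap(2)[of 0 2 3 1] lc_swap(1)[of 0 3 1 2] lc_swap(3)[of 2 1 0 3] lc_swap(2)[of 1 2 3 0]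
    lc_swap(1)[of 1 3 0 2] lc_swap(2)[of 2 0 3 1] lc_swap(1)[of 0 3 2 1] lc_swap(2)[of 2 1 3 0]
    lc_swap(1)[of 1 3 2 0] lc_swap(1)[of 2 3 0 1] lc_swap(1)[of 2 3 1 0]
  by simp_all

section \<open>Minkowski tensor algebra\<close>

lemma mdot_expand: "mdot u v = - u$0 * v$0 + u$1 * v$1 + u$2 * v$2 + u$3 * v$3"
  by (simp add: mdot_def sum_UNIV_4 eta_def)

lemma low_nth [simp]: "low v $ 0 = - v$0" "low v $ 1 = v$1" "low v $ 2 = v$2" "low v $ 3 = v$3"
  by (simp_all add: low_def sum_UNIV_4 eta_def)

lemma raise_nth [simp]: "raise v $ 0 = - v$0" "raise v $ 1 = v$1" "raise v $ 2 = v$2" "raise v $ 3 = v$3"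
  by (simp_all add: raise_def sum_UNIV_4 eta_def)

lemma mdot_commute: "mdot a b = mdot b a"
  by (simp add: mdot_expand algebra_simps)

lemma mdot_bilinear:
  "mdot (a + b) v = mdot a v + mdot b v"
  "mdot v (a + b) = mdot v a + mdot v b"
  "mdot (a - b) v = mdot a v - mdot b v"
  "mdot v (a - b) = mdot v a - mdot v b"
  "mdot (t *\<^sub>R a) v = t * mdot a v"
  "mdot v (t *\<^sub>R a) = t * mdot v a"
  "mdot (- a) v = - mdot a v"
  "mdot v (- a) = - mdot v a"
  by (simp_all add: mdot_expand algebra_simps)

lemma antisym_tensorD:
  assumes "antisym_tensor J"
  shows "J$0$0 = 0" "J$1$1 = 0" "J$2$2 = 0" "J$3$3 = 0"
    "J$1$0 = - J$0$1" "J$2$0 = - J$0$2" "J$3$0 = - J$0$3"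
    "J$2$1 = - J$1$2" "J$3$1 = - J$1$3" "J$3$2 = - J$2$3"
  using assms unfolding antisym_tensor_def by (metis add.inverse_inverse equal_neg_zero)+

text \<open>contract a b pairs the lower components a_\<mu> with the upper components b^\<mu>;
lc3 a b c has the lower components \<epsilon>_\<mu>\<nu>\<rho>\<sigma> a^\<nu> b^\<rho> c^\<sigma>.\<close>

definition contract :: "real^4 \<Rightarrow> real^4 \<Rightarrow> real" where
  "contract a b = (\<Sum>i\<in>UNIV. a$i * b$i)"

definition pfaffian :: "real^4^4 \<Rightarrow> real" where
  "pfaffian S = S$0$1 * S$2$3 - S$0$2 * S$1$3 + S$0$3 * S$1$2"

definition lc3 :: "real^4 \<Rightarrow> real^4 \<Rightarrow> real^4 \<Rightarrow> real^4" where
  "lc3 a b c = (\<chi> m. \<Sum>n\<in>UNIV. \<Sum>r\<in>UNIV. \<Sum>s\<in>UNIV. lc m n r s * a$n * b$r * c$s)"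

lemma contract_expand: "contract a b = a$0 * b$0 + a$1 * b$1 + a$2 * b$2 + a$3 * b$3"
  by (simp add: contract_def sum_UNIV_4)

lemma contract_commute: "contract a b = contract b a"
  by (simp add: contract_expand algebra_simps)

lemma contract_bilinear:
  "contract a (b + c) = contract a b + contract a c"
  "contract a (b - c) = contract a b - contract a c"
  "contract a (t *\<^sub>R b) = t * contract a b"
  by (simp_all add: contract_expand algebra_simps)

lemma mdot_raise: "mdot (raise w) v = contract w v"
  by (simp add: mdot_expand contract_expand)

lemma Jdot_linear:
  "Jdot J (a + b) = Jdot J a + Jdot J b"
  "Jdot J (t *\<^sub>R a) = t *\<^sub>R Jdot J a"
  by (simp_all add: vec_4_eq_iff Jdot_def sum_UNIV_4 algebra_simps)

lemma jform_linear:
  "jform J u (a + b) = jform J u a + jform J u b"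
  "jform J u (t *\<^sub>R a) = t * jform J u a"
  by (simp_all add: jform_def sum_UNIV_4 algebra_simps)

lemma jform_eq_mdot_Jdot: "jform J u f = mdot u (Jdot J f)"
  by (simp add: jform_def Jdot_def sum_UNIV_4 mdot_expand algebra_simps)

lemma jform_self: "antisym_tensor J \<Longrightarrow> jform J u u = 0"
  using antisym_tensorD[of J] by (simp add: jform_def sum_UNIV_4 algebra_simps)

lemma mdot_Jdot_self: "antisym_tensor J \<Longrightarrow> mdot (Jdot J f) f = 0"
  using antisym_tensorD[of J] by (simp add: Jdot_def sum_UNIV_4 mdot_expand algebra_simps)

lemma lc3_linear:
  "lc3 u (a + b) P = lc3 u a P + lc3 u b P"
  "lc3 u (a - b) P = lc3 u a P - lc3 u b P"
  "lc3 u (t *\<^sub>R a) P = t *\<^sub>R lc3 u a P"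
  by (simp_all add: vec_4_eq_iff lc3_def sum_UNIV_4 algebra_simps)

lemma lc3_repeated: "lc3 u P P = 0"
  by (simp add: vec_4_eq_iff lc3_def sum_UNIV_4 algebra_simps)

lemma antisym_spin_tensor:
  assumes "antisym_tensor J"
  shows "antisym_tensor (spin_tensor P J x)"
  unfolding antisym_tensor_def
proof (intro allI)
  fix m n
  have "J$m$n = - J$n$m" using assms unfolding antisym_tensor_def by blast
  then show "spin_tensor P J x $ m $ n = - spin_tensor P J x $ n $ m"
    unfolding spin_tensor_def by simp
qed

lemma Jdot_spin_tensor:
  "Jdot (spin_tensor P J x) f = Jdot J f - mdot P f *\<^sub>R x + mdot x f *\<^sub>R P"
  by (simp add: vec_4_eq_iff Jdot_def spin_tensor_def sum_UNIV_4 mdot_expand algebra_simps)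

lemma pfaffian_spin_tensor:
  assumes "antisym_tensor J"
  shows "pfaffian (spin_tensor P J x) = pfaffian J + contract (PL_low P J) x"
  using antisym_tensorD[OF assms]
  by (simp add: pfaffian_def spin_tensor_def PL_low_def contract_expand sum_UNIV_4 algebra_simps)

lemma PL_low_spin_tensor:
  "antisym_tensor J \<Longrightarrow> PL_low P (spin_tensor P J x) = PL_low P J"
  using antisym_tensorD[of J]
  by (simp add: vec_4_eq_iff PL_low_def spin_tensor_def sum_UNIV_4 algebra_simps)

lemma contract_PL_low_momentum:
  assumes "antisym_tensor J"
  shows "contract (PL_low P J) P = 0"
  using antisym_tensorD[OF assms]
  by (simp add: PL_low_def contract_expand sum_UNIV_4 algebra_simps)

lemma dual_u_spin_tensor: "dual_u u (spin_tensor P J x) = dual_u u J + lc3 u x P"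
  by (simp add: vec_4_eq_iff dual_u_def spin_tensor_def lc3_def sum_UNIV_4 algebra_simps)

lemma PL_low_dual_u_identity:
  assumes "antisym_tensor J"
  shows "contract (PL_low P J) u *\<^sub>R low v - mdot u v *\<^sub>R PL_low P J
       = - mdot v P *\<^sub>R dual_u u J - lc3 u (Jdot J v) P"
  using antisym_tensorD[OF assms]
  by (simp add: vec_4_eq_iff PL_low_def dual_u_def lc3_def Jdot_def sum_UNIV_4 mdot_expand
      contract_expand algebra_simps)

lemma antisym_tensor_eq_0I:
  assumes "antisym_tensor S" "Jdot S f = 0" "PL_low P S = 0" "mdot f P \<noteq> 0"
  shows "S = 0"
proof -
  note S = antisym_tensorD[OF assms(1)]
  let ?h = "Jdot S f" and ?w = "PL_low P S"
  have "mdot f P * S$0$1 = P$1 * ?h$0 - P$0 * ?h$1 - f$3 * ?w$2 + f$2 * ?w$3"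
       "mdot f P * S$0$2 = P$2 * ?h$0 - P$0 * ?h$2 + f$3 * ?w$1 - f$1 * ?w$3"
       "mdot f P * S$0$3 = P$3 * ?h$0 - P$0 * ?h$3 - f$2 * ?w$1 + f$1 * ?w$2"
       "mdot f P * S$1$2 = P$2 * ?h$1 - P$1 * ?h$2 - f$3 * ?w$0 - f$0 * ?w$3"
       "mdot f P * S$1$3 = P$3 * ?h$1 - P$1 * ?h$3 + f$2 * ?w$0 + f$0 * ?w$2"
       "mdot f P * S$2$3 = P$3 * ?h$2 - P$2 * ?h$3 - f$1 * ?w$0 - f$0 * ?w$1"
    using S by (simp_all add: Jdot_def PL_low_def sum_UNIV_4 mdot_expand algebra_simps)
  then show ?thesis
    using assms(2-4) S by (simp add: vec_4_eq_iff)
qed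

lemma pfaffian_eq_0I:
  assumes "antisym_tensor S" "Jdot S f = 0" "f \<noteq> 0"
  shows "pfaffian S = 0"
proof -
  note S = antisym_tensorD[OF assms(1)]
  let ?h = "Jdot S f"
  have "pfaffian S * f$0 = S$2$3 * ?h$1 - S$1$3 * ?h$2 + S$1$2 * ?h$3"
    "pfaffian S * f$1 = S$2$3 * ?h$0 - S$0$3 * ?h$2 + S$0$2 * ?h$3"
    "pfaffian S * f$2 = - S$1$3 * ?h$0 + S$0$3 * ?h$1 - S$0$1 * ?h$3"
    "pfaffian S * f$3 = S$1$2 * ?h$0 - S$0$2 * ?h$1 + S$0$1 * ?h$2"
    using S by (simp_all add: pfaffian_def Jdot_def sum_UNIV_4 algebra_simps)
  then show ?thesis
    using assms(2,3) by (auto simp: vec_4_eq_iff)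
qed

text \<open>With w = (u\<cdot>P) u + P the part of P orthogonal to u, lc3 u d P = 0 says that in the rest frame
of u the spatial vectors d and w are parallel; each component of the conclusion is an explicit
combination of the hypotheses.\<close>

lemma lc3_eq_0_imp_parallel:
  assumes "lc3 u d P = 0" "mdot u d = 0" "mdot u u = -1"
  shows "((mdot u P)^2 + mdot P P) *\<^sub>R d = mdot P d *\<^sub>R (mdot u P *\<^sub>R u + P)"
proof -
  let ?e = "lc3 u d P" and ?k = "(mdot u P)^2 + mdot P P"
  have "?k * d$0 - mdot P d * (mdot u P * u$0 + P$0) = (P$2 * u$3 - P$3 * u$2) * ?e$1 + (- P$1 * u$3 + P$3 * u$1) * ?e$2 + (P$1 * u$2 - P$2 * u$1) * ?e$3 + (P$0 * P$1 * u$1 + P$0 * P$2 * u$2 + P$0 * P$3 * u$3 - P$1 * P$1 * u$0 - P$2 * P$2 * u$0 - P$3 * P$3 * u$0) * mdot u d + (- P$0 * P$1 * d$1 - P$0 * P$2 * d$2 - P$0 * P$3 * d$3 + P$1 * P$1 * d$0 + P$2 * P$2 * d$0 + P$3 * P$3 * d$0) * (mdot u u + 1)"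
    "?k * d$1 - mdot P d * (mdot u P * u$1 + P$1) = (- P$2 * u$3 + P$3 * u$2) * ?e$0 + (- P$0 * u$3 + P$3 * u$0) * ?e$2 + (P$0 * u$2 - P$2 * u$0) * ?e$3 + (- P$0 * P$1 * u$0 + P$0 * P$0 * u$1 + P$1 * P$2 * u$2 + P$1 * P$3 * u$3 - P$2 * P$2 * u$1 - P$3 * P$3 * u$1) * mdot u d + (P$0 * P$1 * d$0 - P$0 * P$0 * d$1 - P$1 * P$2 * d$2 - P$1 * P$3 * d$3 + P$2 * P$2 * d$1 + P$3 * P$3 * d$1) * (mdot u u + 1)"
    "?k * d$2 - mdot P d * (mdot u P * u$2 + P$2) = (P$1 * u$3 - P$3 * u$1) * ?e$0 + (P$0 * u$3 - P$3 * u$0) * ?e$1 + (- P$0 * u$1 + P$1 * u$0) * ?e$3 + (- P$0 * P$2 * u$0 + P$0 * P$0 * u$2 + P$1 * P$2 * u$1 - P$1 * P$1 * u$2 + P$2 * P$3 * u$3 - P$3 * P$3 * u$2) * mdot u d + (P$0 * P$2 * d$0 - P$0 * P$0 * d$2 - P$1 * P$2 * d$1 + P$1 * P$1 * d$2 - P$2 * P$3 * d$3 + P$3 * P$3 * d$2) * (mdot u u + 1)"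
    "?k * d$3 - mdot P d * (mdot u P * u$3 + P$3) = (- P$1 * u$2 + P$2 * u$1) * ?e$0 + (- P$0 * u$2 + P$2 * u$0) * ?e$1 + (P$0 * u$1 - P$1 * u$0) * ?e$2 + (- P$0 * P$3 * u$0 + P$0 * P$0 * u$3 + P$1 * P$3 * u$1 - P$1 * P$1 * u$3 + P$2 * P$3 * u$2 - P$2 * P$2 * u$3) * mdot u d + (P$0 * P$3 * d$0 - P$0 * P$0 * d$3 - P$1 * P$3 * d$1 + P$1 * P$1 * d$3 - P$2 * P$3 * d$2 + P$2 * P$2 * d$3) * (mdot u u + 1)"
    by (simp_all add: lc3_def sum_UNIV_4 mdot_expand algebra_simps power2_eq_square)
  then show ?thesis
    using assms by (simp add: vec_4_eq_iff algebra_simps)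
qed

section \<open>Causal structure\<close>

lemma sum_3_products_square_le:
  fixes a1 a2 a3 b1 b2 b3 :: real
  shows "(a1*b1 + a2*b2 + a3*b3)^2 \<le> (a1^2 + a2^2 + a3^2) * (b1^2 + b2^2 + b3^2)"
proof -
  have "(a1^2 + a2^2 + a3^2) * (b1^2 + b2^2 + b3^2) - (a1*b1 + a2*b2 + a3*b3)^2
      = (a1*b2 - a2*b1)^2 + (a1*b3 - a3*b1)^2 + (a2*b3 - a3*b2)^2"
    by (simp add: algebra_simps power2_eq_square)
  then show ?thesis
    by (smt (verit) zero_le_power2)
qed

lemma mdot_future_timelike_neg:
  assumes "future_timelike f" "future_timelike P"
  shows "mdot f P < 0"
proof -
  let ?A = "(f$1)^2 + (f$2)^2 + (f$3)^2" and ?B = "(P$1)^2 + (P$2)^2 + (P$3)^2"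
  have f0: "f$0 > 0" and P0: "P$0 > 0" and A: "?A < (f$0)^2" and B: "?B < (P$0)^2"
    using assms by (simp_all add: future_timelike_def mdot_expand power2_eq_square)
  have "?A * ?B \<le> ?A * (P$0)^2"
    using B by (simp add: mult_left_mono)
  also have "\<dots> < (f$0 * P$0)^2"
    using A P0 by (simp add: power_mult_distrib mult_strict_right_mono)
  finally have "(f$1*P$1 + f$2*P$2 + f$3*P$3)^2 < (f$0 * P$0)^2"
    using sum_3_products_square_le[of "f$1" "P$1" "f$2" "P$2" "f$3" "P$3"] by linarith
  then have "f$1*P$1 + f$2*P$2 + f$3*P$3 < f$0 * P$0"
    using f0 P0 by (simp add: power2_less_imp_less)
  then show ?thesis
    by (simp add: mdot_expand)
qed

lemma orthogonal_unit_timelike_spacelike: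
  assumes "mdot w u = 0" "mdot u u = -1"
  shows "mdot w w \<ge> 0" and "mdot w w = 0 \<Longrightarrow> w = 0"
proof -
  let ?A = "(w$1)^2 + (w$2)^2 + (w$3)^2"
  have s: "w$1*u$1 + w$2*u$2 + w$3*u$3 = w$0 * u$0"
    and U: "(u$1)^2 + (u$2)^2 + (u$3)^2 = (u$0)^2 - 1"
    using assms by (simp_all add: mdot_expand power2_eq_square)
  have "(w$0)^2 * (u$0)^2 \<le> ?A * ((u$0)^2 - 1)"
    using sum_3_products_square_le[of "w$1" "u$1" "w$2" "u$2" "w$3" "u$3"] s U
    by (simp add: power_mult_distrib)
  then have key: "?A \<le> (?A - (w$0)^2) * (u$0)^2"
    by (simp add: algebra_simps)
  have u0: "(u$0)^2 \<ge> 1"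
    using U by (metis add_nonneg_nonneg diff_ge_0_iff_ge zero_le_power2)
  have ww: "mdot w w = ?A - (w$0)^2"
    by (simp add: mdot_expand power2_eq_square)
  have A: "?A \<ge> 0"
    by simp
  show "mdot w w \<ge> 0"
  proof (rule ccontr)
    assume "\<not> mdot w w \<ge> 0"
    then have "?A - (w$0)^2 < 0"
      using ww by simp
    moreover have "(u$0)^2 > 0"
      using u0 by linarith
    ultimately have "(?A - (w$0)^2) * (u$0)^2 < 0"
      by (rule mult_neg_pos)
    then show False
      using key A by linarith
  qed
  assume "mdot w w = 0"
  then have "?A = 0" and "(w$0)^2 = 0"
    using key ww A by simp_all
  then show "w = 0"
    by (simp add: vec_4_eq_iff add_nonneg_eq_0_iff)
qed

lemma orthogonal_unit_time_component_less:
  assumes "mdot a u = 0" "mdot a a = 1" "mdot u u = -1" "u$0 > 0"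
  shows "\<bar>a$0\<bar> < u$0"
proof -
  have "a$1*u$1 + a$2*u$2 + a$3*u$3 = a$0 * u$0" "(a$1)^2 + (a$2)^2 + (a$3)^2 = 1 + (a$0)^2"
    "(u$1)^2 + (u$2)^2 + (u$3)^2 = (u$0)^2 - 1"
    using assms by (simp_all add: mdot_expand power2_eq_square)
  then have "(a$0)^2 * (u$0)^2 \<le> (1 + (a$0)^2) * ((u$0)^2 - 1)"
    using sum_3_products_square_le[of "a$1" "u$1" "a$2" "u$2" "a$3" "u$3"]
    by (simp add: power_mult_distrib)
  then have "\<bar>a$0\<bar>^2 < (u$0)^2"
    by (simp add: algebra_simps)
  then show ?thesis
    using assms(4) by (simp add: power2_less_imp_less)
qed

lemma mass_mult_c:
  assumes "c > 0" "future_timelike P"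
  shows "mass c P * c > 0" "(mass c P * c)^2 = - mdot P P"
  using assms by (simp_all add: mass_def future_timelike_def)

section \<open>SSC observables and the Newton--Wigner observable\<close>

lemma Jdot_spin_tensor_chi_ssc:
  assumes "antisym_tensor J" "mdot f P \<noteq> 0"
  shows "Jdot (spin_tensor P J (chi_ssc P J f u \<tau>)) f = 0"
proof -
  define \<beta> where "\<beta> = \<tau> / (- mdot u P) - jform J u f / (- mdot f P) * (1 / (- mdot u P))"
  have x: "chi_ssc P J f u \<tau> = (1 / mdot f P) *\<^sub>R Jdot J f + \<beta> *\<^sub>R P"
    by (simp add: chi_ssc_def \<beta>_def algebra_simps)
  have "mdot (chi_ssc P J f u \<tau>) f = \<beta> * mdot f P"
    unfolding x by (simp add: mdot_bilinear mdot_Jdot_self[OF assms(1)] mdot_commute[of P f])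
  then show ?thesis
    unfolding Jdot_spin_tensor mdot_commute[of P f] x
    using assms(2) by (simp add: scaleR_add_right algebra_simps)
qed

lemma mdot_chi_ssc:
  assumes "mdot u P \<noteq> 0"
  shows "mdot u (chi_ssc P J f u \<tau>) = - \<tau>"
  using assms by (simp add: chi_ssc_def mdot_bilinear jform_eq_mdot_Jdot[symmetric] field_simps)

lemma chi_NW_eq_chi_ssc:
  assumes "antisym_tensor J" "m = mass c P * c" "m \<noteq> 0" "m^2 = - mdot P P"
  shows "chi_NW c P J u \<tau> = chi_ssc P J (u + (1/m) *\<^sub>R P) u \<tau>"
proof -
  let ?f = "u + (1/m) *\<^sub>R P"
  have fP: "mdot ?f P = mdot u P - m"
    using assms(3,4) by (simp add: mdot_bilinear field_simps power2_eq_square)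
  have jf: "jform J u ?f = jform J u P / m"
    by (simp add: jform_linear jform_self[OF assms(1)])
  have "- (1 / (m - mdot u P)) = 1 / (mdot u P - m)"
    using divide_minus_right[of 1 "m - mdot u P"] by simp
  then have "chi_NW c P J u \<tau> = (1 / (mdot u P - m)) *\<^sub>R Jdot J ?f
      + (\<tau> / (- mdot u P) - jform J u P / m / (- (mdot u P - m)) * (1 / (- mdot u P))) *\<^sub>R P"
    unfolding chi_NW_def Let_def assms(2)[symmetric] by (simp add: algebra_simps)
  also have "\<dots> = chi_ssc P J ?f u \<tau>"
    unfolding chi_ssc_def fP jf by (simp add: algebra_simps)
  finally show ?thesis .
qed

lemma vec_lambda_rank2_mult_vec:
  "(\<chi> i j. (if i = j then 1 else 0) + a$i * b$j / D - 2 * u$i * l$j / M) *v v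
     = v + (contract b v / D) *\<^sub>R a - (2 * contract l v / M) *\<^sub>R u"
  by (simp add: vec_4_eq_iff matrix_vector_mult_def sum_UNIV_4 contract_expand
      add_divide_distrib diff_divide_distrib algebra_simps)

lemma low_spin_vec:
  assumes "antisym_tensor J" "m = mass c P * c" "m > 0" "mdot u P < 0"
  shows "low (spin_vec c P J u)
    = (1/m) *\<^sub>R PL_low P J + (contract (PL_low P J) u / (m - mdot u P)) *\<^sub>R ((1/m) *\<^sub>R low P + low u)"
proof -
  define W where "W = PL_low P J"
  define a where "a = (\<chi> i. P$i / m + u$i)"
  define b where "b = (\<chi> i. (low P)$i / m + (low u)$i)"
  define D where "D = 1 - mdot u P / m"
  have D: "D \<noteq> 0" "contract W u / (m - mdot u P) = (1/m) * (contract W u / D)"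
    using assms(3,4) by (auto simp: D_def field_simps)
  have WP: "contract W P = 0"
    unfolding W_def by (rule contract_PL_low_momentum[OF assms(1)])
  have "Bmat c P u = (\<chi> i j. (if i = j then 1 else 0) + a$i * b$j / D - 2 * u$i * (low P)$j / m)"
    unfolding Bmat_def Let_def assms(2)[symmetric] a_def b_def D_def by simp
  moreover have "contract b (raise W) = contract W P / m + contract W u"
    by (simp add: b_def contract_expand add_divide_distrib algebra_simps)
  moreover have "contract (low P) (raise W) = 0"
    using WP by (simp add: contract_expand algebra_simps)
  ultimately have B: "Bmat c P u *v raise W = raise W + (contract W u / D) *\<^sub>R a"
    using WP by (simp add: vec_lambda_rank2_mult_vec)
  show ?thesis
    unfolding spin_vec_def W_def[symmetric] assms(2)[symmetric] B D(2)
    by (simp add: vec_4_eq_iff a_def algebra_simps)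
qed

lemma centre_of_spin_chi_NW:
  assumes "antisym_tensor J" "m = mass c P * c" "m > 0" "m^2 = - mdot P P"
    and "mdot u u = -1" "mdot u P < 0"
  shows "low (spin_vec c P J u) = dual_u u (spin_tensor P J (chi_NW c P J u \<tau>))"
proof -
  define f where "f = u + (1/m) *\<^sub>R P"
  define \<beta> where "\<beta> = \<tau> / (- mdot u P) - jform J u f / (- mdot f P) * (1 / (- mdot u P))"
  define W where "W = PL_low P J"
  define k where "k = contract W u"
  have fP: "mdot f P = mdot u P - m"
    using assms(3,4) unfolding f_def by (simp add: mdot_bilinear field_simps power2_eq_square)
  have "chi_NW c P J u \<tau> = chi_ssc P J f u \<tau>"
    unfolding f_def using assms(3) by (intro chi_NW_eq_chi_ssc[OF assms(1,2) _ assms(4)]) simp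
  also have "\<dots> = (1 / (mdot u P - m)) *\<^sub>R Jdot J f + \<beta> *\<^sub>R P"
    by (simp add: chi_ssc_def \<beta>_def fP algebra_simps)
  finally have "chi_NW c P J u \<tau> = (1 / (mdot u P - m)) *\<^sub>R Jdot J f + \<beta> *\<^sub>R P" .
  then have dual: "dual_u u (spin_tensor P J (chi_NW c P J u \<tau>)) = dual_u u J
      + (1 / (mdot u P - m)) *\<^sub>R (lc3 u (Jdot J u) P + (1/m) *\<^sub>R lc3 u (Jdot J P) P)"
    unfolding dual_u_spin_tensor f_def by (simp add: lc3_linear lc3_repeated Jdot_linear scaleR_add_right)
  have "k *\<^sub>R low u + W = - mdot u P *\<^sub>R dual_u u J - lc3 u (Jdot J u) P"
    using PL_low_dual_u_identity[OF assms(1), where u = u and v = u] assms(5) by (simp add: W_def k_def)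
  then have E1: "lc3 u (Jdot J u) P = - mdot u P *\<^sub>R dual_u u J - k *\<^sub>R low u - W"
    by (simp add: algebra_simps)
  have "k *\<^sub>R low P - mdot u P *\<^sub>R W = m^2 *\<^sub>R dual_u u J - lc3 u (Jdot J P) P"
    using PL_low_dual_u_identity[OF assms(1), where u = u and v = P] assms(4) by (simp add: W_def k_def mdot_commute)
  then have E2: "lc3 u (Jdot J P) P = m^2 *\<^sub>R dual_u u J + mdot u P *\<^sub>R W - k *\<^sub>R low P"
    by (simp add: algebra_simps)
  have "(1/m) * w + (k / (m - mdot u P)) * ((1/m) * lP + lu)
      = d + (1 / (mdot u P - m)) * ((- mdot u P * d - k * lu - w) + (1/m) * (m^2 * d + mdot u P * w - k * lP))"
    for w lP lu d
    using assms(3,6) by (simp add: field_simps power2_eq_square)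
  then show ?thesis
    unfolding low_spin_vec[OF assms(1,2,3,6)] dual E1 E2 W_def[symmetric] k_def[symmetric] vec_eq_iff
    by simp
qed

section \<open>Uniqueness of the centre of spin\<close>

lemma eq_0_if_wedge_eq_0:
  assumes "\<And>i j. d$i * P$j = d$j * P$i" "mdot u d = 0" "mdot u P \<noteq> 0"
  shows "d = 0"
proof -
  have "mdot u P * d$i = 0" for i
  proof -
    have "mdot u P * d$i - mdot u d * P$i = - u$0 * (d$i * P$0 - d$0 * P$i) + u$1 * (d$i * P$1 - d$1 * P$i)
        + u$2 * (d$i * P$2 - d$2 * P$i) + u$3 * (d$i * P$3 - d$3 * P$i)"
      by (simp add: mdot_expand algebra_simps)
    then show ?thesis
      using assms(1)[of i 0] assms(1)[of i 1] assms(1)[of i 2] assms(1)[of i 3] assms(2) by simp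
  qed
  then show ?thesis
    using assms(3) by (simp add: vec_eq_iff)
qed

lemma eq_0_if_orthogonal_PL:
  assumes "lc3 u d P = 0" "mdot u d = 0" "mdot u u = -1" "mdot u P \<noteq> 0"
    and "contract W d = 0" "contract W P = 0" "contract W u \<noteq> 0"
  shows "d = 0"
proof -
  define k where "k = (mdot u P)^2 + mdot P P"
  define w where "w = mdot u P *\<^sub>R u + P"
  have kd: "k *\<^sub>R d = mdot P d *\<^sub>R w"
    unfolding k_def w_def by (rule lc3_eq_0_imp_parallel[OF assms(1-3)])
  have Ww: "contract W w = mdot u P * contract W u"
    unfolding w_def using assms(6) by (simp add: contract_bilinear contract_commute[of W])
  have "mdot P d * (mdot u P * contract W u) = k * contract W d"
    using arg_cong[OF kd, of "contract W"] Ww by (simp add: contract_bilinear)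
  then have "mdot P d = 0"
    using assms(4,5,7) by simp
  moreover have "k \<noteq> 0"
  proof
    assume "k = 0"
    have "mdot w u = 0" "mdot w w = k"
      unfolding w_def k_def using assms(3)
      by (simp_all add: mdot_bilinear mdot_commute[of P u] power2_eq_square algebra_simps)
    with \<open>k = 0\<close> have "w = 0"
      using orthogonal_unit_timelike_spacelike(2)[OF _ assms(3)] by blast
    then show False
      using Ww assms(4,7) by (simp add: contract_expand)
  qed
  ultimately show ?thesis
    using kd by simp
qed

lemma chi_ssc_eq_if_dual_u_eq:
  assumes J: "antisym_tensor J" and uP: "mdot u P \<noteq> 0" and uu: "mdot u u = -1"
    and fP: "mdot f P \<noteq> 0" and gP: "mdot g P \<noteq> 0"
    and dual: "dual_u u (spin_tensor P J (chi_ssc P J f u \<tau>)) = dual_u u (spin_tensor P J (chi_ssc P J g u \<tau>))"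
    and W: "contract (PL_low P J) u \<noteq> 0 \<or> PL_low P J = 0"
  shows "chi_ssc P J f u \<tau> = chi_ssc P J g u \<tau>"
proof -
  define x where "x = chi_ssc P J f u \<tau>"
  define y where "y = chi_ssc P J g u \<tau>"
  have Sx: "antisym_tensor (spin_tensor P J x)" "Jdot (spin_tensor P J x) f = 0"
    unfolding x_def by (simp_all add: antisym_spin_tensor J Jdot_spin_tensor_chi_ssc J fP)
  have Sy: "antisym_tensor (spin_tensor P J y)" "Jdot (spin_tensor P J y) g = 0"
    unfolding y_def by (simp_all add: antisym_spin_tensor J Jdot_spin_tensor_chi_ssc J gP)
  have ud: "mdot u (x - y) = 0"
    unfolding x_def y_def using uP by (simp add: mdot_bilinear mdot_chi_ssc)
  show ?thesis
  proof (cases "PL_low P J = 0")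
    case True
    then have "spin_tensor P J x = 0" "spin_tensor P J y = 0"
      using antisym_tensor_eq_0I[OF Sx, of P] antisym_tensor_eq_0I[OF Sy, of P] fP gP
      by (simp_all add: PL_low_spin_tensor J)
    then have "spin_tensor P J x $ i $ j = spin_tensor P J y $ i $ j" for i j
      by simp
    then have "(x - y)$i * P$j = (x - y)$j * P$i" for i j
      by (simp add: spin_tensor_def algebra_simps)
    then show ?thesis
      using eq_0_if_wedge_eq_0[OF _ ud uP] unfolding x_def y_def by simp
  next
    case False
    have "f \<noteq> 0" "g \<noteq> 0"
      using fP gP by (auto simp: mdot_expand)
    then have "pfaffian (spin_tensor P J x) = 0" "pfaffian (spin_tensor P J y) = 0"
      using Sx Sy by (simp_all add: pfaffian_eq_0I)
    then have "contract (PL_low P J) (x - y) = 0"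
      by (simp add: pfaffian_spin_tensor J contract_bilinear)
    moreover have "lc3 u (x - y) P = 0"
      using dual unfolding x_def[symmetric] y_def[symmetric] by (simp add: dual_u_spin_tensor lc3_linear)
    ultimately have "x - y = 0"
      using eq_0_if_orthogonal_PL[OF _ ud uu uP _ contract_PL_low_momentum[OF J]] False W by blast
    then show ?thesis
      unfolding x_def y_def by simp
  qed
qed

lemma chi_ssc_eq_chi_NW_if_centre_of_spin:
  assumes c: "c > 0" and P: "future_timelike P" and J: "antisym_tensor J"
    and uu: "mdot u u = -1" and u0: "u$0 > 0" and f: "future_timelike f"
    and centre: "low (spin_vec c P J u) = dual_u u (spin_tensor P J (chi_ssc P J f u \<tau>))"
    and W: "contract (PL_low P J) u \<noteq> 0 \<or> PL_low P J = 0"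
  shows "chi_ssc P J f u \<tau> = chi_NW c P J u \<tau>"
proof -
  define m where "m = mass c P * c"
  have m: "m > 0" "m^2 = - mdot P P"
    unfolding m_def using mass_mult_c[OF c P] by simp_all
  have uP: "mdot u P < 0"
    using mdot_future_timelike_neg[OF _ P] uu u0 by (simp add: future_timelike_def)
  have NW: "chi_NW c P J u \<tau> = chi_ssc P J (u + (1/m) *\<^sub>R P) u \<tau>"
    using chi_NW_eq_chi_ssc[OF J m_def _ m(2)] m(1) by simp
  have "mdot (u + (1/m) *\<^sub>R P) P = mdot u P - m"
    using m by (simp add: mdot_bilinear field_simps power2_eq_square)
  then have "mdot (u + (1/m) *\<^sub>R P) P \<noteq> 0"
    using uP m(1) by simp
  moreover have "mdot f P \<noteq> 0"
    using mdot_future_timelike_neg[OF f P] by simp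
  moreover have "dual_u u (spin_tensor P J (chi_ssc P J f u \<tau>))
      = dual_u u (spin_tensor P J (chi_ssc P J (u + (1/m) *\<^sub>R P) u \<tau>))"
    using centre centre_of_spin_chi_NW[OF J m_def m uu uP, of \<tau>] unfolding NW by simp
  ultimately show ?thesis
    unfolding NW using chi_ssc_eq_if_dual_u_eq[OF J _ uu] uP W by simp
qed

section \<open>Approximation of hyperplanes orthogonal to W\<close>

lemma unit_hyperboloid_approx:
  assumes uu: "mdot u u = -1" and u0: "u$0 > 0" and W: "W \<noteq> 0" "contract W u = 0"
  obtains X where "\<And>n. mdot (X n) (X n) = -1" "\<And>n. X n $ 0 > 0" "\<And>n. contract W (X n) \<noteq> 0"
    and "X \<longlonglongrightarrow> u"
proof -
  define q where "q = sqrt (mdot (raise W) (raise W))"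
  define a where "a = (1/q) *\<^sub>R raise W"
  have "mdot (raise W) u = 0" "raise W \<noteq> 0"
    using W by (auto simp: mdot_raise vec_4_eq_iff)
  then have "mdot (raise W) (raise W) > 0"
    using orthogonal_unit_timelike_spacelike[OF _ uu] by (metis order_neq_le_trans)
  then have q: "q > 0" "q^2 = mdot (raise W) (raise W)"
    unfolding q_def by simp_all
  have au: "mdot a u = 0" and aa: "mdot a a = 1" and Wa: "contract W a = q"
    using W q \<open>mdot (raise W) u = 0\<close>
    by (simp_all add: a_def mdot_bilinear mdot_raise[symmetric] q(2)[symmetric] power2_eq_square)
  have a0: "\<bar>a$0\<bar> < u$0"
    by (rule orthogonal_unit_time_component_less[OF au aa uu u0])
  \<comment> \<open>boost u by rapidity t n towards the spacelike direction a of W\<close>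
  define t where "t n = inverse (real (Suc n))" for n
  define X where "X n = cosh (t n) *\<^sub>R u + sinh (t n) *\<^sub>R a" for n
  show ?thesis
  proof
    fix n
    show "mdot (X n) (X n) = -1"
      using uu au aa cosh_square_eq[of "t n"]
      by (simp add: X_def mdot_bilinear mdot_commute[of u a] power2_eq_square algebra_simps)
    have "t n > 0"
      by (simp add: t_def)
    then have s: "sinh (t n) \<ge> 0"
      by simp
    have "- (sinh (t n) * a$0) \<le> sinh (t n) * \<bar>a$0\<bar>"
      using mult_left_mono[OF _ s, of "- a$0" "\<bar>a$0\<bar>"] by simp
    moreover have "sinh (t n) * \<bar>a$0\<bar> \<le> sinh (t n) * u$0"
      using mult_left_mono[OF _ s] a0 by simp
    moreover have "sinh (t n) * u$0 < cosh (t n) * u$0"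
      using u0 sinh_less_cosh_real[of "t n"] by simp
    ultimately show "X n $ 0 > 0"
      by (simp add: X_def)
    show "contract W (X n) \<noteq> 0"
      using W(2) Wa q(1) \<open>t n > 0\<close> by (simp add: X_def contract_bilinear)
  next
    have "t \<longlonglongrightarrow> 0"
      unfolding t_def by (rule LIMSEQ_inverse_real_of_nat)
    then have "X \<longlonglongrightarrow> cosh 0 *\<^sub>R u + sinh 0 *\<^sub>R a"
      unfolding X_def by (intro tendsto_intros)
    then show "X \<longlonglongrightarrow> u"
      by simp
  qed
qed

lemma continuous_on_mdot_left [continuous_intros]:
  "continuous_on S f \<Longrightarrow> continuous_on S (\<lambda>x. mdot (f x) v)"
  unfolding mdot_def by (intro continuous_intros)

lemma continuous_on_Jdot [continuous_intros]:
  "continuous_on S f \<Longrightarrow> continuous_on S (\<lambda>x. Jdot J (f x))"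
  unfolding Jdot_def low_def by (intro continuous_intros)

lemma continuous_on_jform_left [continuous_intros]:
  "continuous_on S f \<Longrightarrow> continuous_on S (\<lambda>x. jform J (f x) v)"
  unfolding jform_def low_def by (intro continuous_intros)

lemma continuous_on_chi_NW:
  assumes "c > 0" "future_timelike P"
  shows "continuous_on SpHP (\<lambda>\<Sigma>. chi_NW c P J (fst \<Sigma>) (snd \<Sigma>))"
proof -
  have uP: "mdot (fst \<Sigma>) P < 0" if "\<Sigma> \<in> SpHP" for \<Sigma>
    using that mdot_future_timelike_neg[OF _ assms(2)] by (auto simp: SpHP_def future_timelike_def)
  have m: "mass c P * c > 0"
    by (rule mass_mult_c(1)[OF assms])
  show ?thesis
    unfolding chi_NW_def Let_def
    by (intro continuous_intros continuous_on_fst continuous_on_snd; use uP m in force)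
qed

lemma eq_on_SpHP_by_density:
  fixes g h :: "(real^4) \<times> real \<Rightarrow> 'a::t2_space"
  assumes "continuous_on SpHP g" "continuous_on SpHP h"
    and "\<And>u \<tau>. (u, \<tau>) \<in> SpHP \<Longrightarrow> contract W u \<noteq> 0 \<or> W = 0 \<Longrightarrow> g (u, \<tau>) = h (u, \<tau>)"
    and "(u, \<tau>) \<in> SpHP"
  shows "g (u, \<tau>) = h (u, \<tau>)"
proof (cases "contract W u \<noteq> 0 \<or> W = 0")
  case True
  then show ?thesis
    using assms(3,4) by blast
next
  case False
  have uu: "mdot u u = -1" "u$0 > 0"
    using assms(4) by (simp_all add: SpHP_def)
  obtain X where X: "\<And>n. mdot (X n) (X n) = -1" "\<And>n. X n $ 0 > 0" "\<And>n. contract W (X n) \<noteq> 0"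
    and "X \<longlonglongrightarrow> u"
    using unit_hyperboloid_approx[OF uu] False by blast
  then have XS: "(X n, \<tau>) \<in> SpHP" for n
    by (simp add: SpHP_def)
  have lim: "(\<lambda>n. (X n, \<tau>)) \<longlonglongrightarrow> (u, \<tau>)"
    using \<open>X \<longlonglongrightarrow> u\<close> by (intro tendsto_intros)
  have "(\<lambda>n. k (X n, \<tau>)) \<longlonglongrightarrow> k (u, \<tau>)" if "continuous_on SpHP k" for k :: "_ \<Rightarrow> 'a"
    using continuous_on_sequentially[THEN iffD1, OF that, rule_format, of "(u, \<tau>)" "\<lambda>n. (X n, \<tau>)"]
      assms(4) XS lim by (simp add: comp_def)
  then have "(\<lambda>n. g (X n, \<tau>)) \<longlonglongrightarrow> g (u, \<tau>)" "(\<lambda>n. h (X n, \<tau>)) \<longlonglongrightarrow> h (u, \<tau>)"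
    using assms(1,2) by blast+
  moreover have "g (X n, \<tau>) = h (X n, \<tau>)" for n
    using assms(3) XS X(3) by blast
  ultimately show ?thesis
    using LIMSEQ_unique by fastforce
qed

theorem mainTheorem5:
  fixes c :: real
    and P :: "'g \<Rightarrow> real^4"
    and J :: "'g \<Rightarrow> real^4^4"
    and \<chi>' :: "(real^4) \<times> real \<Rightarrow> 'g \<Rightarrow> real^4"
  assumes "c > 0"
    and "\<forall>\<gamma>. future_timelike (P \<gamma>)"
    and "\<forall>\<gamma>. antisym_tensor (J \<gamma>)"
    and "is_SSC_observable P J \<chi>'"
    and "\<forall>\<gamma>. continuous_on SpHP (\<lambda>\<Sigma>. \<chi>' \<Sigma> \<gamma>)"
    and "centre_of_spin c P J \<chi>'"
  shows "\<forall>(u, \<tau>)\<in>SpHP. \<forall>\<gamma>. \<chi>' (u, \<tau>) \<gamma> = chi_NW c (P \<gamma>) (J \<gamma>) u \<tau>"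
proof (clarify)
  fix u \<tau> \<gamma>
  assume "(u, \<tau>) \<in> SpHP"
  from assms(4) obtain f where f: "\<forall>\<Sigma>\<in>SpHP. \<forall>\<gamma>. future_timelike (f \<Sigma> \<gamma>)"
    and \<chi>_ssc: "\<forall>(u, \<tau>)\<in>SpHP. \<forall>\<gamma>. \<chi>' (u, \<tau>) \<gamma> = chi_ssc (P \<gamma>) (J \<gamma>) (f (u, \<tau>) \<gamma>) u \<tau>"
    unfolding is_SSC_observable_def by blast
  have "\<chi>' (v, \<sigma>) \<gamma> = chi_NW c (P \<gamma>) (J \<gamma>) v \<sigma>"
    if "(v, \<sigma>) \<in> SpHP" "contract (PL_low (P \<gamma>) (J \<gamma>)) v \<noteq> 0 \<or> PL_low (P \<gamma>) (J \<gamma>) = 0" for v \<sigma>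
    using chi_ssc_eq_chi_NW_if_centre_of_spin[OF assms(1) _ _ _ _ _ _ that(2)] that(1) f \<chi>_ssc assms(2,3,6)
    by (auto simp: SpHP_def centre_of_spin_def)
  then show "\<chi>' (u, \<tau>) \<gamma> = chi_NW c (P \<gamma>) (J \<gamma>) u \<tau>"
    using eq_on_SpHP_by_density[where W = "PL_low (P \<gamma>) (J \<gamma>)" and g = "\<lambda>\<Sigma>. \<chi>' \<Sigma> \<gamma>"
        and h = "\<lambda>\<Sigma>. chi_NW c (P \<gamma>) (J \<gamma>) (fst \<Sigma>) (snd \<Sigma>)"]
      assms(1,2,5) continuous_on_chi_NW \<open>(u, \<tau>) \<in> SpHP\<close> by simp
qed

end
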